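(* Let $\mathfrak k$ be a non-toral $\mathsf H$-subalgebra of $\mathfrak g$ and $v\in\mathcal W^\Sigma(\mathfrak k)$. Then $|\mathrm{Ric}(\gamma_v(t))|_{\gamma_v(t)}\to+\infty$ as $t\to+\infty$.
   Context: $\mathsf G$ compact Lie group, $\mathsf H\subset\mathsf G$ closed, $M=\mathsf G/\mathsf H$ compact connected, $\mathsf G$ acting almost effectively; $Q$ an $\mathrm{Ad}(\mathsf G)$-invariant inner product on $\mathfrak g$, $\mathfrak m$ the $Q$-orthogonal complement of $\mathfrak h$, $Q_{\mathfrak m}=Q|_{\mathfrak m}$; invariant metrics = $\mathrm{Ad}(\mathsf H)$-invariant inner products on $\mathfrak m$. An $\mathsf H$-subalgebra is an $\mathrm{Ad}(\mathsf H)$-invariant Lie subalgebra $\mathfrak k$ with $\mathfrak h\subsetneq\mathfrak k\subsetneq\mathfrak g$; it is non-toral if $[\mathfrak k,\mathfrak k]\not\subset\mathfrak h$. $\mathscr F^{\mathsf G}$: ordered tuples $\varphi=(\mathfrak m_1,\dots,\mathfrak m_\ell)$ of mutually $Q$-orthogonal $\mathrm{Ad}(\mathsf H)$-irreducible invariant subspaces with $\mathfrak m=\bigoplus\mathfrak m_i$, $I=\{1,\dots,\ell\}$, $\mathfrak m_{I'}=\sum_{i\in I'}\mathfrak m_i$; $[ijk]_\varphi=\sum Q([e_\alpha,e_\beta],e_\gamma)^2$ over $e_\alpha\in\mathfrak m_i,e_\beta\in\mathfrak m_j,e_\gamma\in\mathfrak m_k$ in a $Q$-orthonormal $\varphi$-adapted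 basis. $\Sigma$: $Q_{\mathfrak m}$-symmetric endomorphisms $v$ of $\mathfrak m$ commuting with $\mathrm{Ad}(\mathsf H)|_{\mathfrak m}$, with $\mathrm{tr}\,v=0$, $\mathrm{tr}\,v^2=1$; $\gamma_v(t)=Q_{\mathfrak m}(e^{tv}\cdot,\cdot)$. A good decomposition for $v$ is $\varphi$ with $v|_{\mathfrak m_i}=v_i\mathrm{Id}$; $\hat v_1<\dots<\hat v_{\ell_v}$ are the distinct eigenvalues of $v$ and $I^v_1(\varphi)=\{i:v_i=\hat v_1\}$. $v$ is a submersion direction if for a (equivalently every) good decomposition $\varphi$ and all $(i,j,k)\in I^3$, $[ijk]_\varphi>0$ implies $v_i-v_j-v_k+\hat v_1\le0$. $\mathcal W^\Sigma(\mathfrak k)$ is the set of submersion directions $v$ with $\mathfrak m_{I^v_1(\varphi)}=\mathfrak k\cap\mathfrak m$ for every good decomposition $\varphi$ for $v$. *)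

theory Defs
  imports "HOL-Analysis.Analysis"
begin

text \<open>Algebraic model of a compact homogeneous space G/H.
  The Lie algebra g is real^'n with Q = the standard inner product;
  linear endomorphisms of g are real matrices real^'n^'n.\<close>

primrec matpow :: "real^'n^'n \<Rightarrow> nat \<Rightarrow> real^'n^'n" where
  "matpow A 0 = mat 1"
| "matpow A (Suc k) = A ** matpow A k"

definition mexp :: "real^'n^'n \<Rightarrow> real^'n^'n" where
  "mexp A = (\<Sum>k. (1 / fact k) *\<^sub>R matpow A k)"

definition lie_algebra :: "(real^'n \<Rightarrow> real^'n \<Rightarrow> real^'n) \<Rightarrow> bool" where
  "lie_algebra br \<longleftrightarrow> bilinear br \<and> (\<forall>x. br x x = 0) \<and>
     (\<forall>x y z. br x (br y z) + br y (br z x) + br z (br x y) = 0)"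

text \<open>Ad-invariance of Q (infinitesimal form).\<close>
definition ad_invariant_Q :: "(real^'n \<Rightarrow> real^'n \<Rightarrow> real^'n) \<Rightarrow> bool" where
  "ad_invariant_Q br \<longleftrightarrow> (\<forall>x y z. inner (br x y) z = inner x (br y z))"

definition lie_subalgebra :: "(real^'n \<Rightarrow> real^'n \<Rightarrow> real^'n) \<Rightarrow> (real^'n) set \<Rightarrow> bool" where
  "lie_subalgebra br s \<longleftrightarrow> subspace s \<and> (\<forall>x\<in>s. \<forall>y\<in>s. br x y \<in> s)"

definition lie_ideal :: "(real^'n \<Rightarrow> real^'n \<Rightarrow> real^'n) \<Rightarrow> (real^'n) set \<Rightarrow> bool" where
  "lie_ideal br s \<longleftrightarrow> subspace s \<and> (\<forall>x. \<forall>y\<in>s. br x y \<in> s)"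

text \<open>AdH models the isotropy representation Ad(H) on g: a compact group of
  Q-orthogonal Lie algebra automorphisms of g preserving h, whose Lie algebra is ad(h).\<close>
definition isotropy_rep ::
  "(real^'n \<Rightarrow> real^'n \<Rightarrow> real^'n) \<Rightarrow> (real^'n) set \<Rightarrow> (real^'n^'n) set \<Rightarrow> bool" where
  "isotropy_rep br h AdH \<longleftrightarrow>
     compact AdH \<and> mat 1 \<in> AdH \<and> (\<forall>A\<in>AdH. \<forall>B\<in>AdH. A ** B \<in> AdH) \<and>
     (\<forall>A\<in>AdH. invertible A \<and> matrix_inv A \<in> AdH) \<and>
     (\<forall>A\<in>AdH. orthogonal_matrix A \<and> (\<forall>x y. A *v br x y = br (A *v x) (A *v y)) \<and>
               (\<forall>x\<in>h. A *v x \<in> h)) \<and>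
     {D. \<forall>t::real. mexp (t *\<^sub>R D) \<in> AdH} = {matrix (br X) | X. X \<in> h}"

text \<open>Standing assumptions: g compact Lie algebra with Ad-invariant inner product Q,
  h the Lie algebra of H, almost effective action (h contains no nonzero ideal of g).\<close>
definition homog_setting ::
  "(real^'n \<Rightarrow> real^'n \<Rightarrow> real^'n) \<Rightarrow> (real^'n) set \<Rightarrow> (real^'n^'n) set \<Rightarrow> bool" where
  "homog_setting br h AdH \<longleftrightarrow> lie_algebra br \<and> ad_invariant_Q br \<and> lie_subalgebra br h \<and>
     (\<forall>I. lie_ideal br I \<and> I \<subseteq> h \<longrightarrow> I = {0}) \<and> isotropy_rep br h AdH"

definition mspace :: "(real^'n) set \<Rightarrow> (real^'n) set" where
  "mspace h = orthogonal_comp h"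

definition adh_invariant :: "(real^'n^'n) set \<Rightarrow> (real^'n) set \<Rightarrow> bool" where
  "adh_invariant AdH S \<longleftrightarrow> (\<forall>A\<in>AdH. \<forall>x\<in>S. A *v x \<in> S)"

definition h_subalgebra ::
  "(real^'n \<Rightarrow> real^'n \<Rightarrow> real^'n) \<Rightarrow> (real^'n) set \<Rightarrow> (real^'n^'n) set \<Rightarrow> (real^'n) set \<Rightarrow> bool" where
  "h_subalgebra br h AdH k \<longleftrightarrow> lie_subalgebra br k \<and> adh_invariant AdH k \<and> h \<subset> k \<and> k \<subset> UNIV"

definition non_toral :: "(real^'n \<Rightarrow> real^'n \<Rightarrow> real^'n) \<Rightarrow> (real^'n) set \<Rightarrow> (real^'n) set \<Rightarrow> bool" where
  "non_toral br h k \<longleftrightarrow> \<not> (\<forall>x\<in>k. \<forall>y\<in>k. br x y \<in> h)"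

definition adh_irreducible :: "(real^'n^'n) set \<Rightarrow> (real^'n) set \<Rightarrow> bool" where
  "adh_irreducible AdH S \<longleftrightarrow> subspace S \<and> S \<noteq> {0} \<and> adh_invariant AdH S \<and>
     (\<forall>W. subspace W \<and> W \<subseteq> S \<and> adh_invariant AdH W \<longrightarrow> W = {0} \<or> W = S)"

text \<open>Elements of F^G: ordered tuples (lists) of mutually Q-orthogonal Ad(H)-irreducible
  subspaces summing to m.\<close>
definition decomposition :: "(real^'n) set \<Rightarrow> (real^'n^'n) set \<Rightarrow> (real^'n) set list \<Rightarrow> bool" where
  "decomposition h AdH \<phi> \<longleftrightarrow> (\<forall>S\<in>set \<phi>. adh_irreducible AdH S) \<and>
     (\<forall>i<length \<phi>. \<forall>j<length \<phi>. i \<noteq> j \<longrightarrow> (\<forall>x\<in>\<phi>!i. \<forall>y\<in>\<phi>!j. inner x y = 0)) \<and>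
     span (\<Union>(set \<phi>)) = mspace h"

definition onb :: "(real^'n) set \<Rightarrow> (real^'n) set \<Rightarrow> bool" where
  "onb S B \<longleftrightarrow> B \<subseteq> S \<and> span B = S \<and> (\<forall>b\<in>B. norm b = 1) \<and> pairwise orthogonal B"

text \<open>The structure constants [ijk]_phi (indices are 0-based list positions).\<close>
definition bracket_coef ::
  "(real^'n \<Rightarrow> real^'n \<Rightarrow> real^'n) \<Rightarrow> (real^'n) set list \<Rightarrow> nat \<Rightarrow> nat \<Rightarrow> nat \<Rightarrow> real" where
  "bracket_coef br \<phi> i j k =
     (let Bi = (SOME B. onb (\<phi>!i) B); Bj = (SOME B. onb (\<phi>!j) B); Bk = (SOME B. onb (\<phi>!k) B)
      in (\<Sum>a\<in>Bi. \<Sum>b\<in>Bj. \<Sum>c\<in>Bk. (inner (br a b) c)\<^sup>2))"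

text \<open>Sigma: an endomorphism v of m is represented by the matrix V that agrees with v on m
  and vanishes on h.\<close>
definition SigmaSet :: "(real^'n) set \<Rightarrow> (real^'n^'n) set \<Rightarrow> (real^'n^'n) set" where
  "SigmaSet h AdH = {V. (\<forall>x\<in>h. V *v x = 0) \<and> (\<forall>x\<in>mspace h. V *v x \<in> mspace h) \<and>
     transpose V = V \<and> (\<forall>A\<in>AdH. A ** V = V ** A) \<and> trace V = 0 \<and> trace (V ** V) = 1}"

definition vcoef :: "real^'n^'n \<Rightarrow> (real^'n) set \<Rightarrow> real" where
  "vcoef V S = (SOME c. \<forall>x\<in>S. V *v x = c *\<^sub>R x)"

definition good_decomp :: "(real^'n) set \<Rightarrow> (real^'n^'n) set \<Rightarrow> real^'n^'n \<Rightarrow> (real^'n) set list \<Rightarrow> bool" where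
  "good_decomp h AdH V \<phi> \<longleftrightarrow> decomposition h AdH \<phi> \<and>
     (\<forall>i<length \<phi>. \<exists>c. \<forall>x\<in>\<phi>!i. V *v x = c *\<^sub>R x)"

definition vhat1 :: "(real^'n) set \<Rightarrow> real^'n^'n \<Rightarrow> real" where
  "vhat1 h V = Min {c. \<exists>x\<in>mspace h. x \<noteq> 0 \<and> V *v x = c *\<^sub>R x}"

definition I1 :: "(real^'n) set \<Rightarrow> real^'n^'n \<Rightarrow> (real^'n) set list \<Rightarrow> nat set" where
  "I1 h V \<phi> = {i. i < length \<phi> \<and> vcoef V (\<phi>!i) = vhat1 h V}"

definition submersion_dir ::
  "(real^'n \<Rightarrow> real^'n \<Rightarrow> real^'n) \<Rightarrow> (real^'n) set \<Rightarrow> (real^'n^'n) set \<Rightarrow> real^'n^'n \<Rightarrow> bool" where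
  "submersion_dir br h AdH V \<longleftrightarrow> (\<exists>\<phi>. good_decomp h AdH V \<phi> \<and>
     (\<forall>i<length \<phi>. \<forall>j<length \<phi>. \<forall>k<length \<phi>. bracket_coef br \<phi> i j k > 0 \<longrightarrow>
        vcoef V (\<phi>!i) - vcoef V (\<phi>!j) - vcoef V (\<phi>!k) + vhat1 h V \<le> 0))"

definition W_Sigma ::
  "(real^'n \<Rightarrow> real^'n \<Rightarrow> real^'n) \<Rightarrow> (real^'n) set \<Rightarrow> (real^'n^'n) set \<Rightarrow> (real^'n) set \<Rightarrow> (real^'n^'n) set" where
  "W_Sigma br h AdH k = {V. V \<in> SigmaSet h AdH \<and> submersion_dir br h AdH V \<and>
     (\<forall>\<phi>. good_decomp h AdH V \<phi> \<longrightarrow> span (\<Union>i\<in>I1 h V \<phi>. \<phi>!i) = k \<inter> mspace h)}"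

text \<open>Invariant metrics are given as bilinear forms g on m.  Ricci tensor via the
  standard algebraic formula for G-invariant metrics on reductive homogeneous spaces of a
  unimodular (here compact) group (Besse, Einstein Manifolds, Cor. 7.38, polarized).\<close>

definition projm :: "(real^'n) set \<Rightarrow> real^'n \<Rightarrow> real^'n" where
  "projm h x = (THE y. y \<in> mspace h \<and> x - y \<in> h)"

definition killing :: "(real^'n \<Rightarrow> real^'n \<Rightarrow> real^'n) \<Rightarrow> real^'n \<Rightarrow> real^'n \<Rightarrow> real" where
  "killing br X Y = trace (matrix (br X) ** matrix (br Y))"

definition gonb :: "(real^'n) set \<Rightarrow> (real^'n \<Rightarrow> real^'n \<Rightarrow> real) \<Rightarrow> (real^'n) set \<Rightarrow> bool" where
  "gonb h g B \<longleftrightarrow> B \<subseteq> mspace h \<and> span B = mspace h \<and> (\<forall>b\<in>B. g b b = 1) \<and>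
     (\<forall>b\<in>B. \<forall>c\<in>B. b \<noteq> c \<longrightarrow> g b c = 0)"

definition ricci ::
  "(real^'n \<Rightarrow> real^'n \<Rightarrow> real^'n) \<Rightarrow> (real^'n) set \<Rightarrow> (real^'n \<Rightarrow> real^'n \<Rightarrow> real) \<Rightarrow> real^'n \<Rightarrow> real^'n \<Rightarrow> real" where
  "ricci br h g X Y = (let B = (SOME B. gonb h g B) in
      - (1/2) * (\<Sum>b\<in>B. g (projm h (br X b)) (projm h (br Y b)))
      - (1/2) * killing br X Y
      + (1/4) * (\<Sum>b\<in>B. \<Sum>c\<in>B. g (projm h (br b c)) X * g (projm h (br b c)) Y))"

definition ric_norm ::
  "(real^'n \<Rightarrow> real^'n \<Rightarrow> real^'n) \<Rightarrow> (real^'n) set \<Rightarrow> (real^'n \<Rightarrow> real^'n \<Rightarrow> real) \<Rightarrow> real" where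
  "ric_norm br h g = (let B = (SOME B. gonb h g B) in
      sqrt (\<Sum>b\<in>B. \<Sum>c\<in>B. (ricci br h g b c)\<^sup>2))"

text \<open>gamma_v(t) = Q(e^{tv} . , .) on m.\<close>
definition gamma :: "real^'n^'n \<Rightarrow> real \<Rightarrow> real^'n \<Rightarrow> real^'n \<Rightarrow> real" where
  "gamma V t x y = inner (mexp (t *\<^sub>R V) *v x) y"

end

theory Submission
  imports Defs
begin

text \<open>
  Diagonalise v in a Q-orthonormal basis (e_a) of m adapted to a good decomposition, with
  eigenvalues \<lambda>_a, and let \<mu> = vhat1 be the smallest one; \<mu> < 0 because tr v = 0 and
  tr v^2 = 1. The vectors exp(-t \<lambda>_a / 2) e_a are \<gamma>_v(t)-orthonormal. Take e_0 in k \<inter> m, so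
  \<lambda>_0 = \<mu>. The submersion inequalities give \<lambda>_c \<le> \<lambda>_b whenever Q([e_0, e_b], e_c) \<noteq> 0, so for
  t \<ge> 0 the only negative term of Ric(e_0, e_0) is dominated by the m-part of the Killing form
  term, while the last term restricted to pairs from k \<inter> m does not depend on t. Hence, with
  (h_i) a Q-orthonormal basis of h,
    Ric(\<gamma>_v(t))(e_0, e_0) \<ge> L(e_0) = 1/2 \<Sigma> |[e_0, h_i]|^2 + 1/4 \<Sigma> Q([e_a, e_b], e_0)^2  (e_a, e_b \<in> k \<inter> m),
  and as e_0 has \<gamma>_v(t)-length exp(t \<mu> / 2), |Ric(\<gamma>_v(t))| \<ge> exp(-t \<mu>) L(e_0). Finally L(e_0) > 0
  for some e_0: otherwise k \<inter> m centralises h and [k \<inter> m, k \<inter> m] is orthogonal to k \<inter> m, which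
  forces [k, k] \<subseteq> h.
\<close>

lemma linear_sum_scaleR:
  assumes "linear f" "finite B"
  shows "f (\<Sum>b\<in>B. u b *\<^sub>R b) = (\<Sum>b\<in>B. u b *\<^sub>R f b)"
  using assms by (simp add: linear_sum linear_scale)

lemma bilinear_mult_linear:
  fixes f g :: "'a::real_vector \<Rightarrow> real"
  assumes "linear f" "linear g"
  shows "bilinear (\<lambda>x y. f x * g y)"
  unfolding bilinear_def
proof (intro conjI allI)
  show "linear (\<lambda>y. f x * g y)" for x
    using linear_compose_scale_right[OF assms(2), of "f x"] by simp
  show "linear (\<lambda>x. f x * g y)" for y
    using linear_compose_scale_right[OF assms(1), of "g y"] by (simp add: mult.commute)
qed

lemma bilinear_compose_linear:
  assumes "bilinear g" "linear f1" "linear f2"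
  shows "bilinear (\<lambda>x y. g (f1 x) (f2 y))"
  using assms linear_compose[of f1 "\<lambda>x. g x _"] linear_compose[of f2 "g _"]
  by (simp add: bilinear_def o_def)

lemma linear_compose_bilinear:
  assumes "linear f" "bilinear g"
  shows "bilinear (\<lambda>x y. f (g x y))"
  using assms linear_compose[of "\<lambda>x. g x _" f] linear_compose[of "g _" f]
  by (simp add: bilinear_def o_def)

lemma bilinear_eq_0_on_span:
  assumes "bilinear f" "x \<in> span B" "y \<in> span C" "\<And>b c. b \<in> B \<Longrightarrow> c \<in> C \<Longrightarrow> f b c = 0"
  shows "f x y = 0"
  using bilinear_eq[OF assms(1), of "\<lambda>_ _. 0" "span B" B "span C" C x y] assms(2-4)
  by (simp add: bilinear_def linear_zero)

lemma bilinear_inner: "bilinear (inner :: 'a::real_inner \<Rightarrow> 'a \<Rightarrow> real)"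
  unfolding bilinear_def
  using bounded_linear.linear[OF bounded_linear_inner_left] bounded_linear.linear[OF bounded_linear_inner_right]
  by blast

lemma linear_const_mult: "linear (f::'a::real_vector \<Rightarrow> real) \<Longrightarrow> linear (\<lambda>x. c * f x)"
  using linear_compose_scale_right[of f c] by simp

lemma linear_mult_const: "linear (f::'a::real_vector \<Rightarrow> real) \<Longrightarrow> linear (\<lambda>x. f x * c)"
  using linear_const_mult[of f c] by (simp add: mult.commute)

lemma orthonormal_expansion:
  fixes g :: "'a::real_vector \<Rightarrow> 'a \<Rightarrow> real"
  assumes lg: "\<And>y. linear (\<lambda>x. g x y)"
    and B: "finite B" "x \<in> span B" "\<And>b c. b\<in>B \<Longrightarrow> c\<in>B \<Longrightarrow> g b c = (if b = c then 1 else 0)"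
  shows "x = (\<Sum>b\<in>B. g x b *\<^sub>R b)"
proof -
  obtain u where u: "x = (\<Sum>b\<in>B. u b *\<^sub>R b)" using B(2) span_finite[OF B(1)] by auto
  have "g x c = u c" if "c \<in> B" for c
  proof -
    have "g x c = (\<Sum>b\<in>B. u b * g b c)"
      using linear_sum_scaleR[OF lg[of c] B(1), of u] u by simp
    also have "\<dots> = (\<Sum>b\<in>B. if b = c then u b else 0)"
      by (rule sum.cong) (use B(3) that in auto)
    also have "\<dots> = u c" using B(1) that by simp
    finally show ?thesis .
  qed
  then show ?thesis using u by (metis (no_types, lifting) sum.cong)
qed

lemma bilinear_orthonormal_expansion:
  fixes g \<beta> :: "'a::real_vector \<Rightarrow> 'a \<Rightarrow> real"
  assumes lg: "\<And>y. linear (\<lambda>x. g x y)" and \<beta>: "bilinear \<beta>"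
    and B: "finite B" "x \<in> span B" "\<And>b c. b\<in>B \<Longrightarrow> c\<in>B \<Longrightarrow> g b c = (if b = c then 1 else 0)"
  shows "\<beta> x x = (\<Sum>b\<in>B. \<Sum>c\<in>B. g x b * g x c * \<beta> b c)"
proof -
  have lb1: "linear (\<lambda>x. \<beta> x y)" and lb2: "linear (\<beta> x)" for x y
    using \<beta> by (simp_all add: bilinear_def)
  have "\<beta> x x = \<beta> (\<Sum>b\<in>B. g x b *\<^sub>R b) (\<Sum>c\<in>B. g x c *\<^sub>R c)"
    using orthonormal_expansion[OF lg B] by simp
  also have "\<dots> = (\<Sum>b\<in>B. g x b * \<beta> b (\<Sum>c\<in>B. g x c *\<^sub>R c))"
    using linear_sum_scaleR[OF lb1 B(1)] by simp
  also have "\<dots> = (\<Sum>b\<in>B. g x b * (\<Sum>c\<in>B. g x c * \<beta> b c))"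
    using linear_sum_scaleR[OF lb2 B(1)] by simp
  finally show ?thesis by (simp add: sum_distrib_left mult.assoc)
qed

lemma orthonormal_gram_sum:
  fixes g :: "'a::real_vector \<Rightarrow> 'a \<Rightarrow> real"
  assumes lg: "\<And>y. linear (\<lambda>x. g x y)" and sym: "\<And>x y. x\<in>S \<Longrightarrow> y\<in>S \<Longrightarrow> g x y = g y x"
    and B: "finite B" "B \<subseteq> S" "S \<subseteq> span B" "\<And>b c. b\<in>B \<Longrightarrow> c\<in>B \<Longrightarrow> g b c = (if b = c then 1 else 0)"
    and xy: "x \<in> S" "y \<in> S"
  shows "(\<Sum>b\<in>B. g b x * g b y) = g x y"
proof -
  have "g x y = g (\<Sum>b\<in>B. g x b *\<^sub>R b) y"
    using orthonormal_expansion[OF lg B(1) _ B(4)] B(3) xy(1) by auto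
  also have "\<dots> = (\<Sum>b\<in>B. g x b * g b y)" using linear_sum_scaleR[OF lg B(1)] by simp
  also have "\<dots> = (\<Sum>b\<in>B. g b x * g b y)"
    by (rule sum.cong) (use sym xy B(2) in auto)
  finally show ?thesis by simp
qed

lemma orthonormal_trace_eq:
  fixes g \<beta> :: "'a::real_vector \<Rightarrow> 'a \<Rightarrow> real"
  assumes lg: "\<And>y. linear (\<lambda>x. g x y)" and sym: "\<And>x y. x\<in>S \<Longrightarrow> y\<in>S \<Longrightarrow> g x y = g y x"
    and \<beta>: "bilinear \<beta>"
    and B: "finite B" "B \<subseteq> S" "S \<subseteq> span B" "\<And>b c. b\<in>B \<Longrightarrow> c\<in>B \<Longrightarrow> g b c = (if b = c then 1 else 0)"
    and B': "finite B'" "B' \<subseteq> S" "S \<subseteq> span B'" "\<And>b c. b\<in>B' \<Longrightarrow> c\<in>B' \<Longrightarrow> g b c = (if b = c then 1 else 0)"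
  shows "(\<Sum>b\<in>B'. \<beta> b b) = (\<Sum>b\<in>B. \<beta> b b)"
proof -
  have "(\<Sum>x\<in>B'. \<beta> x x) = (\<Sum>x\<in>B'. \<Sum>b\<in>B. \<Sum>c\<in>B. g x b * g x c * \<beta> b c)"
    by (rule sum.cong) (use bilinear_orthonormal_expansion[OF lg \<beta> B(1) _ B(4)] B(3) B'(2) in auto)
  also have "\<dots> = (\<Sum>b\<in>B. \<Sum>c\<in>B. \<Sum>x\<in>B'. g x b * g x c * \<beta> b c)"
    by (subst sum.swap) (simp add: sum.swap[of _ B'])
  also have "\<dots> = (\<Sum>b\<in>B. \<Sum>c\<in>B. g b c * \<beta> b c)"
    using orthonormal_gram_sum[OF lg sym B'] B(2) by (simp add: sum_distrib_right[symmetric] subset_eq)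
  also have "\<dots> = (\<Sum>b\<in>B. \<beta> b b)"
  proof (rule sum.cong[OF refl])
    fix b assume "b \<in> B"
    have "(\<Sum>c\<in>B. g b c * \<beta> b c) = (\<Sum>c\<in>B. if b = c then \<beta> b c else 0)"
      by (rule sum.cong) (use B(4) \<open>b\<in>B\<close> in auto)
    then show "(\<Sum>c\<in>B. g b c * \<beta> b c) = \<beta> b b" using B(1) \<open>b\<in>B\<close> by simp
  qed
  finally show ?thesis .
qed

lemma onb_inner: "onb S B \<Longrightarrow> b \<in> B \<Longrightarrow> c \<in> B \<Longrightarrow> inner b c = (if b = c then 1 else 0)"
  by (auto simp: onb_def pairwise_def orthogonal_def norm_eq_1)

lemma onb_finite:
  assumes "onb S B"
  shows "finite B"
proof -
  have "0 \<notin> B" using assms by (auto simp: onb_def)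
  then have "independent B" using assms pairwise_orthogonal_independent by (auto simp: onb_def)
  then show ?thesis by (rule independent_imp_finite)
qed

lemma onb_expansion: "onb S B \<Longrightarrow> x \<in> S \<Longrightarrow> x = (\<Sum>b\<in>B. inner x b *\<^sub>R b)"
  by (rule orthonormal_expansion[OF bounded_linear.linear[OF bounded_linear_inner_left]])
     (auto simp: onb_finite onb_inner onb_def)

lemma onb_parseval: "onb S B \<Longrightarrow> x \<in> S \<Longrightarrow> inner x x = (\<Sum>b\<in>B. (inner x b)\<^sup>2)"
  using onb_expansion[of S B x] inner_sum_left[of "\<lambda>b. inner x b *\<^sub>R b" B x]
  by (simp add: inner_commute power2_eq_square)

lemma onb_Basis: "onb UNIV Basis"
  by (simp add: onb_def orthogonal_Basis)

lemma trace_eq_sum_onb: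
  fixes A :: "real^'n^'n"
  assumes B: "onb UNIV B"
  shows "trace A = (\<Sum>b\<in>B. inner (A *v b) b)"
proof -
  have lin: "linear (\<lambda>x. inner x y)" for y :: "real^'n"
    by (rule bounded_linear.linear[OF bounded_linear_inner_left])
  have \<beta>: "bilinear (\<lambda>u v. inner (A *v u) v)"
    by (rule bilinear_compose_linear[OF bilinear_inner matrix_vector_mul_linear linear_id[unfolded id_def]])
  have Basis: "Basis = range (\<lambda>i. axis i (1::real))"
    by (auto simp: Basis_vec_def)
  have "trace A = (\<Sum>i\<in>UNIV. inner (A *v axis i 1) (axis i 1))"
    by (simp add: trace_def cart_eq_inner_axis[symmetric] matrix_vector_mult_basis column_def)
  also have "\<dots> = (\<Sum>b\<in>Basis. inner (A *v b) b)"
    unfolding Basis by (rule sum.reindex[symmetric, unfolded o_def]) (auto simp: inj_on_def axis_eq_axis)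
  also have "\<dots> = (\<Sum>b\<in>B. inner (A *v b) b)"
    by (rule orthonormal_trace_eq[where S=UNIV, OF lin inner_commute \<beta> onb_finite[OF B] _ _ onb_inner[OF B]
          onb_finite[OF onb_Basis] _ _ onb_inner[OF onb_Basis]])
       (use B in \<open>auto simp: onb_def\<close>)
  finally show ?thesis .
qed

lemma gonb_orthonormal: "gonb h g B \<Longrightarrow> b \<in> B \<Longrightarrow> c \<in> B \<Longrightarrow> g b c = (if b = c then 1 else 0)"
  by (auto simp: gonb_def)

lemma gonb_finite:
  assumes B: "gonb h g B" and lg: "\<And>y. linear (\<lambda>x. g x y)"
  shows "finite B"
proof -
  have "independent B"
  proof
    assume "dependent B"
    then obtain T u v where T: "finite T" "T \<subseteq> B" "(\<Sum>v\<in>T. u v *\<^sub>R v) = 0" and v: "v \<in> T" "u v \<noteq> 0"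
      unfolding real_vector.dependent_explicit by blast
    have "0 = g (\<Sum>w\<in>T. u w *\<^sub>R w) v" using T(3) linear_0[OF lg] by simp
    also have "\<dots> = (\<Sum>w\<in>T. u w * g w v)" using linear_sum_scaleR[OF lg T(1)] by simp
    also have "\<dots> = (\<Sum>w\<in>T. if w = v then u w else 0)"
    proof (rule sum.cong[OF refl])
      fix w assume "w \<in> T"
      then have "w \<in> B" "v \<in> B" using T(2) v by auto
      then show "u w * g w v = (if w = v then u w else 0)" using B by (auto simp: gonb_def)
    qed
    also have "\<dots> = u v" using T(1) v by simp
    finally show False using v by simp
  qed
  then show ?thesis by (rule independent_imp_finite)
qed

definition onb_of :: "(real^'n) set \<Rightarrow> (real^'n) set" where
  "onb_of S = (SOME B. onb S B)"

lemma onb_onb_of: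
  assumes "subspace S"
  shows "onb S (onb_of S)"
proof -
  obtain B where "B \<subseteq> S" "pairwise orthogonal B" "\<And>x. x \<in> B \<Longrightarrow> norm x = 1" "span B = S"
    by (rule orthonormal_basis_subspace[OF assms]) blast
  then have "onb S B" by (simp add: onb_def)
  then show ?thesis unfolding onb_of_def by (rule someI)
qed

lemma span_UN_onb:
  assumes "\<And>i. i \<in> I \<Longrightarrow> onb (S i) (B i)"
  shows "span (\<Union>i\<in>I. B i) = span (\<Union>i\<in>I. S i)"
  unfolding span_eq
proof
  show "(\<Union>i\<in>I. B i) \<subseteq> span (\<Union>i\<in>I. S i)"
    using assms by (fastforce simp: onb_def intro: span_base)
  show "(\<Union>i\<in>I. S i) \<subseteq> span (\<Union>i\<in>I. B i)"
  proof
    fix x assume "x \<in> (\<Union>i\<in>I. S i)"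
    then obtain i where i: "i \<in> I" "x \<in> span (B i)" using assms by (auto simp: onb_def)
    then show "x \<in> span (\<Union>i\<in>I. B i)" using span_mono[of "B i" "\<Union>i\<in>I. B i"] by blast
  qed
qed

lemma matpow_entry_bound:
  fixes A :: "real^'n^'n"
  shows "\<bar>matpow A k $ i $ j\<bar> \<le> (real CARD('n) * norm A)^k"
proof (induction k arbitrary: i j)
  case 0
  then show ?case by (simp add: mat_def)
next
  case (Suc k)
  have "\<bar>(A ** matpow A k) $ i $ j\<bar> \<le> (\<Sum>l\<in>UNIV. \<bar>A$i$l\<bar> * \<bar>matpow A k $l$j\<bar>)"
    unfolding matrix_matrix_mult_def by (simp add: abs_mult[symmetric] sum_abs)
  also have "\<dots> \<le> (\<Sum>l\<in>(UNIV::'n set). norm A * (real CARD('n) * norm A)^k)"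
  proof (rule sum_mono)
    fix l
    have "\<bar>A$i$l\<bar> \<le> norm A"
      using component_le_norm_cart[of "A$i" l] Finite_Cartesian_Product.norm_nth_le[of A i] by linarith
    then show "\<bar>A$i$l\<bar> * \<bar>matpow A k $l$j\<bar> \<le> norm A * (real CARD('n) * norm A)^k"
      by (simp add: Suc.IH mult_mono')
  qed
  also have "\<dots> = (real CARD('n) * norm A)^(Suc k)" by simp
  finally show ?case by simp
qed

lemma norm_matrix_le_sum_abs:
  fixes M :: "real^'n^'n"
  shows "norm M \<le> (\<Sum>i\<in>UNIV. \<Sum>j\<in>UNIV. \<bar>M$i$j\<bar>)"
proof -
  have "norm M \<le> (\<Sum>i\<in>UNIV. norm (M$i))"
    unfolding norm_vec_def by (rule L2_set_le_sum) auto
  also have "\<dots> \<le> (\<Sum>i\<in>UNIV. \<Sum>j\<in>UNIV. \<bar>M$i$j\<bar>)"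
    by (rule sum_mono) (rule norm_le_l1_cart)
  finally show ?thesis .
qed

lemma summable_mexp:
  fixes A :: "real^'n^'n"
  shows "summable (\<lambda>k. (1 / fact k) *\<^sub>R matpow A k)"
proof (rule summable_comparison_test')
  let ?C = "real CARD('n) * norm A"
  show "summable (\<lambda>k. real CARD('n) ^ 2 * (inverse (fact k) * ?C ^ k))"
    by (rule summable_mult) (rule summable_exp)
  fix k :: nat
  have "norm (matpow A k) \<le> (\<Sum>i\<in>(UNIV::'n set). \<Sum>j\<in>(UNIV::'n set). ?C ^ k)"
    using norm_matrix_le_sum_abs[of "matpow A k"] matpow_entry_bound[of A k]
    by (meson order_trans sum_mono)
  also have "\<dots> = real CARD('n) ^ 2 * ?C ^ k" by (simp add: power2_eq_square)
  finally show "norm ((1 / fact k) *\<^sub>R matpow A k) \<le> real CARD('n) ^ 2 * (inverse (fact k) * ?C ^ k)"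
    by (simp add: divide_simps mult.commute mult.left_commute)
qed

lemma matpow_eigenvector:
  fixes A :: "real^'n^'n"
  assumes "A *v x = c *\<^sub>R x"
  shows "matpow A k *v x = (c ^ k) *\<^sub>R x"
proof (induction k)
  case (Suc k)
  have "matpow A (Suc k) *v x = (c^k) *\<^sub>R (A *v x)"
    using Suc by (simp add: matrix_vector_mul_assoc[symmetric] linear_scale[OF matrix_vector_mul_linear])
  then show ?case by (simp add: assms)
qed simp

lemma bounded_linear_matrix_vector_mult_left: "bounded_linear (\<lambda>M::real^'n^'m. M *v x)"
proof -
  have "linear (\<lambda>M::real^'n^'m. M *v x)"
    by (rule linearI) (simp_all add: vec_eq_iff matrix_vector_mult_def sum.distrib sum_distrib_left algebra_simps)
  then show ?thesis by (simp add: linear_conv_bounded_linear)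
qed

lemma mexp_eigenvector:
  fixes V :: "real^'n^'n"
  assumes "V *v x = c *\<^sub>R x"
  shows "mexp (t *\<^sub>R V) *v x = exp (t * c) *\<^sub>R x"
proof -
  have tV: "(t *\<^sub>R V) *v x = (t*c) *\<^sub>R x"
    by (simp add: scaleR_matrix_vector_assoc[symmetric] assms)
  have "mexp (t *\<^sub>R V) *v x = (\<Sum>k. ((1 / fact k) *\<^sub>R matpow (t *\<^sub>R V) k) *v x)"
    unfolding mexp_def by (rule bounded_linear.suminf[OF bounded_linear_matrix_vector_mult_left summable_mexp])
  also have "\<dots> = (\<Sum>k. ((t*c)^k / fact k) *\<^sub>R x)"
    by (simp add: scaleR_matrix_vector_assoc[symmetric] matpow_eigenvector[OF tV])
  also have "\<dots> = (\<Sum>k. (t*c)^k / fact k) *\<^sub>R x"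
    by (rule suminf_scaleR_left[symmetric]) (use summable_exp[of "t*c"] in \<open>simp add: field_simps\<close>)
  also have "(\<Sum>k. (t*c)^k / fact k) = exp (t*c)"
    by (simp add: exp_def divide_inverse mult.commute)
  finally show ?thesis .
qed

lemma inner_symmetric_matrix:
  fixes A :: "real^'n^'n"
  assumes "transpose A = A"
  shows "inner (A *v x) y = inner x (A *v y)"
  by (metis assms dot_lmul_matrix inner_commute transpose_matrix_vector)

lemma filterlim_exp_mult_at_top:
  assumes "(\<mu>::real) < 0" "L > 0"
  shows "filterlim (\<lambda>t. exp (- (t * \<mu>)) * L) at_top at_top"
proof -
  have "filterlim (\<lambda>t::real. exp ((- \<mu>) * t)) at_top at_top"
    by (rule filterlim_compose[OF exp_at_top filterlim_tendsto_pos_mult_at_top[OF tendsto_const _ filterlim_ident]])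
       (use assms in simp)
  then have "filterlim (\<lambda>t::real. exp ((- \<mu>) * t) * L) at_top at_top"
    by (rule filterlim_at_top_mult_tendsto_pos[OF tendsto_const assms(2)])
  then show ?thesis by (simp add: mult.commute)
qed

locale lie_pair =
  fixes br :: "real^'n \<Rightarrow> real^'n \<Rightarrow> real^'n" and h :: "(real^'n) set"
  assumes bilinear_br: "bilinear br" and br_self: "\<And>x. br x x = 0"
    and ad_invariant: "ad_invariant_Q br" and subspace_h: "subspace h"
begin

abbreviation "m \<equiv> mspace h"
abbreviation "P \<equiv> projm h"

lemma linear_br_left: "linear (\<lambda>x. br x y)"
  using bilinear_br by (simp add: bilinear_def)

lemma linear_br_right: "linear (br x)"
  using bilinear_br by (simp add: bilinear_def)

lemma br_antisym: "br y x = - br x y"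
proof -
  have "br (x + y) (x + y) = br x x + br x y + br y x + br y y"
    by (simp add: bilinear_ladd[OF bilinear_br] bilinear_radd[OF bilinear_br])
  then show ?thesis using br_self by (simp add: add_eq_0_iff add.commute)
qed

lemma inner_br_assoc: "inner (br x y) z = inner x (br y z)"
  using ad_invariant by (simp add: ad_invariant_Q_def)

lemma inner_br_skew: "inner (br x y) z = - inner y (br x z)"
  using inner_br_assoc[of y x z] br_antisym[of y x] by simp

lemma subspace_m: "subspace m"
  by (simp add: mspace_def subspace_orthogonal_comp)

lemma inner_h_m: "x \<in> h \<Longrightarrow> y \<in> m \<Longrightarrow> inner x y = 0"
  by (simp add: mspace_def orthogonal_comp_def orthogonal_def)

lemma h_inter_m: "x \<in> h \<Longrightarrow> x \<in> m \<Longrightarrow> x = 0"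
  using inner_h_m by fastforce

lemma h_plus_m_unique: "y \<in> m \<Longrightarrow> x - y \<in> h \<Longrightarrow> y' \<in> m \<Longrightarrow> x - y' \<in> h \<Longrightarrow> y = y'"
  using h_inter_m[of "y - y'"] subspace_diff[OF subspace_m, of y y'] subspace_diff[OF subspace_h, of "x - y'" "x - y"]
  by simp

lemma projm: "P x \<in> m \<and> x - P x \<in> h"
proof -
  obtain y z where y: "y \<in> span h" and z: "\<And>w. w \<in> span h \<Longrightarrow> orthogonal z w" and "x = y + z"
    using orthogonal_subspace_decomp_exists[of h x] by metis
  have "z \<in> m" using z span_base[of _ h] by (auto simp: mspace_def orthogonal_comp_def orthogonal_commute)
  moreover have "x - z \<in> h" using y \<open>x = y + z\<close> span_eq_iff[THEN iffD2, OF subspace_h] by simp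
  ultimately show ?thesis
    unfolding projm_def by (rule theI[where a=z, OF conjI]) (use h_plus_m_unique \<open>z \<in> m\<close> \<open>x - z \<in> h\<close> in blast)
qed

lemma projm_in_m: "P x \<in> m"
  using projm by blast

lemma projm_diff_in_h: "x - P x \<in> h"
  using projm by blast

lemma projm_unique: "y \<in> m \<Longrightarrow> x - y \<in> h \<Longrightarrow> P x = y"
  using projm h_plus_m_unique by blast

lemma inner_projm: "f \<in> m \<Longrightarrow> inner (P x) f = inner x f"
  using inner_h_m[OF projm_diff_in_h, of f x] by (simp add: inner_diff_left)

lemma linear_projm: "linear P"
proof (rule linearI)
  show "P (x + y) = P x + P y" for x y
  proof (rule projm_unique)
    show "P x + P y \<in> m" using projm_in_m subspace_m by (simp add: subspace_add)
    have "x + y - (P x + P y) = (x - P x) + (y - P y)" by simp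
    then show "x + y - (P x + P y) \<in> h" using projm_diff_in_h subspace_h by (metis subspace_add)
  qed
  show "P (c *\<^sub>R x) = c *\<^sub>R P x" for c x
  proof (rule projm_unique)
    show "c *\<^sub>R P x \<in> m" using projm_in_m subspace_m by (simp add: subspace_scale)
    have "c *\<^sub>R x - c *\<^sub>R P x = c *\<^sub>R (x - P x)" by (simp add: algebra_simps)
    then show "c *\<^sub>R x - c *\<^sub>R P x \<in> h" using projm_diff_in_h subspace_h by (metis subspace_scale)
  qed
qed

lemma killing_expand:
  "killing br X Y = (\<Sum>i\<in>UNIV. \<Sum>k\<in>UNIV. br X (axis k 1) $ i * br Y (axis i 1) $ k)"
  by (simp add: killing_def trace_def matrix_matrix_mult_def matrix_def)

lemma bilinear_killing: "bilinear (killing br)"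
proof -
  have nth: "linear (\<lambda>x. br x y $ i)" for y i
    using linear_compose[OF linear_br_left bounded_linear.linear[OF bounded_linear_vec_nth]]
    by (simp add: o_def)
  show ?thesis
    unfolding bilinear_def killing_expand
    by (intro conjI allI linear_compose_sum ballI linear_const_mult linear_mult_const nth)
qed

lemma bilinear_ricci:
  assumes g: "bilinear g"
  shows "bilinear (ricci br h g)"
proof -
  have g_lin: "linear (\<lambda>x. g x z)" "linear (\<lambda>x. g z x)" for z
    using g by (simp_all add: bilinear_def)
  have comp: "linear (\<lambda>x. f (P (br x y)))" "linear (\<lambda>y. f (P (br x y)))" if "linear f" for f x y
    using linear_compose[OF linear_compose[OF linear_br_left linear_projm] that]
      linear_compose[OF linear_compose[OF linear_br_right linear_projm] that]
    by (simp_all add: o_def)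
  have P_br: "linear (\<lambda>x. g (P (br x y)) z)" "linear (\<lambda>y. g (P (br x y)) z)"
    "linear (\<lambda>x. g z (P (br x y)))" "linear (\<lambda>y. g z (P (br x y)))" for x y z
    using comp[OF g_lin(1)] comp[OF g_lin(2)] by blast+
  have k_lin: "linear (\<lambda>x. killing br x y)" "linear (\<lambda>y. killing br x y)" for x y
    using bilinear_killing by (simp_all add: bilinear_def)
  show ?thesis
    unfolding bilinear_def ricci_def Let_def
    by (intro conjI allI linear_compose_add linear_compose_sub linear_const_mult linear_mult_const
        linear_compose_sum ballI P_br g_lin k_lin)
qed

text \<open>Modulo h, the assumptions reduce a bracket [x, y] in k to the bracket of the m-parts of x and y;
  its own m-part lies in k \<inter> m and is orthogonal to k \<inter> m, hence vanishes.\<close>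
lemma toral_if_centralizing:
  assumes hsa: "lie_subalgebra br h" and ksa: "lie_subalgebra br k" and hk: "h \<subseteq> k"
    and commute: "\<And>x y. x \<in> k \<inter> m \<Longrightarrow> y \<in> h \<Longrightarrow> br x y = 0"
    and orth: "\<And>x y z. x \<in> k \<inter> m \<Longrightarrow> y \<in> k \<inter> m \<Longrightarrow> z \<in> k \<inter> m \<Longrightarrow> inner (br x y) z = 0"
  shows "\<not> non_toral br h k"
proof
  assume "non_toral br h k"
  then obtain x y where xy: "x \<in> k" "y \<in> k" "br x y \<notin> h" by (auto simp: non_toral_def)
  have k_m: "P z \<in> k \<inter> m" if "z \<in> k" for z
  proof -
    have "z - P z \<in> k" using projm_diff_in_h hk by blast
    then have "z - (z - P z) \<in> k"
      using ksa that subspace_diff by (metis lie_subalgebra_def)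
    then show ?thesis using projm_in_m by simp
  qed
  let ?xh = "x - P x" and ?yh = "y - P y"
  have "br x y = br (?xh + P x) (?yh + P y)" by simp
  also have "\<dots> = br ?xh ?yh + br ?xh (P y) + br (P x) ?yh + br (P x) (P y)"
    unfolding bilinear_ladd[OF bilinear_br] bilinear_radd[OF bilinear_br] by (simp only: add_ac)
  also have "br ?xh (P y) = 0"
    using commute[OF k_m[OF xy(2)] projm_diff_in_h] br_antisym[of ?xh "P y"] by simp
  also have "br (P x) ?yh = 0"
    using commute[OF k_m[OF xy(1)] projm_diff_in_h] by simp
  finally have split: "br x y = br ?xh ?yh + br (P x) (P y)" by simp
  have "br ?xh ?yh \<in> h"
    using hsa projm_diff_in_h by (simp add: lie_subalgebra_def)
  moreover have "br (P x) (P y) \<in> h"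
  proof -
    let ?w = "br (P x) (P y)"
    have "?w \<in> k" using ksa k_m xy by (auto simp: lie_subalgebra_def)
    then have "inner ?w (P ?w) = 0" using orth k_m xy by blast
    then have "P ?w = 0" using inner_projm[OF projm_in_m, of ?w ?w] by simp
    then show ?thesis using projm_diff_in_h[of ?w] by simp
  qed
  ultimately have "br x y \<in> h" using split subspace_h by (simp add: subspace_add)
  then show False using xy(3) by simp
qed

end

locale eigenframe = lie_pair br h
  for br :: "real^'n \<Rightarrow> real^'n \<Rightarrow> real^'n" and h :: "(real^'n) set" +
  fixes V :: "real^'n^'n" and lam :: "real^'n \<Rightarrow> real" and E :: "(real^'n) set"
  assumes onb_E: "onb (mspace h) E"
    and eigenvector_E: "\<And>e. e \<in> E \<Longrightarrow> V *v e = lam e *\<^sub>R e"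
begin

definition "Eh = onb_of h"

lemma onb_Eh: "onb h Eh"
  unfolding Eh_def by (rule onb_onb_of[OF subspace_h])

lemma finite_E: "finite E" and finite_Eh: "finite Eh"
  using onb_finite onb_E onb_Eh by blast+

lemma E_subset_m: "E \<subseteq> m" and span_E: "span E = m"
  using onb_E by (auto simp: onb_def)

lemma inner_E: "e \<in> E \<Longrightarrow> f \<in> E \<Longrightarrow> inner e f = (if e = f then 1 else 0)"
  using onb_inner[OF onb_E] .

lemma Eh_E_disjoint: "Eh \<inter> E = {}"
proof -
  have "e \<noteq> 0" if "e \<in> E" for e using inner_E[OF that that] by auto
  then show ?thesis using h_inter_m onb_Eh E_subset_m by (fastforce simp: onb_def)
qed

lemma onb_Eh_E: "onb UNIV (Eh \<union> E)"
  unfolding onb_def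
proof (intro conjI)
  have "x \<in> span (Eh \<union> E)" for x
  proof -
    have "x - P x \<in> span (Eh \<union> E)" "P x \<in> span (Eh \<union> E)"
      using projm_diff_in_h projm_in_m onb_Eh span_E span_mono[of Eh "Eh \<union> E"] span_mono[of E "Eh \<union> E"]
      by (auto simp: onb_def)
    then show ?thesis using span_add by fastforce
  qed
  then show "span (Eh \<union> E) = UNIV" by auto
  show "\<forall>b\<in>Eh \<union> E. norm b = 1" using onb_Eh onb_E by (auto simp: onb_def)
  have "inner x y = 0 \<and> inner y x = 0" if "x \<in> Eh" "y \<in> E" for x y
    using inner_h_m[of x y] onb_Eh E_subset_m that by (auto simp: onb_def inner_commute)
  then show "pairwise orthogonal (Eh \<union> E)"
    using onb_Eh onb_E by (auto simp: onb_def pairwise_def orthogonal_def)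
qed simp

lemma sum_sq_inner_E_le: "(\<Sum>f\<in>E. (inner y f)\<^sup>2) \<le> (norm y)\<^sup>2"
proof -
  have "(norm y)\<^sup>2 = (\<Sum>f\<in>Eh \<union> E. (inner y f)\<^sup>2)"
    using onb_parseval[OF onb_Eh_E] by (simp add: power2_norm_eq_inner)
  also have "\<dots> = (\<Sum>f\<in>Eh. (inner y f)\<^sup>2) + (\<Sum>f\<in>E. (inner y f)\<^sup>2)"
    by (rule sum.union_disjoint[OF finite_Eh finite_E Eh_E_disjoint])
  finally show ?thesis by (simp add: sum_nonneg)
qed

lemma killing_self: "killing br x x = - (\<Sum>e\<in>Eh \<union> E. (norm (br x e))\<^sup>2)"
proof -
  have "killing br x x = (\<Sum>e\<in>Eh \<union> E. inner (br x (br x e)) e)"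
    unfolding killing_def trace_eq_sum_onb[OF onb_Eh_E]
    by (simp add: matrix_vector_mul_assoc[symmetric] matrix_vector_mul(2)[OF linear_br_right])
  also have "\<dots> = - (\<Sum>e\<in>Eh \<union> E. (norm (br x e))\<^sup>2)"
    by (simp add: inner_br_skew[of x "br x _"] power2_norm_eq_inner sum_negf)
  finally show ?thesis .
qed

lemma trace_eq_sum_E:
  assumes "\<And>x. x \<in> h \<Longrightarrow> A *v x = 0"
  shows "trace A = (\<Sum>e\<in>E. inner (A *v e) e)"
proof -
  have "trace A = (\<Sum>e\<in>Eh. inner (A *v e) e) + (\<Sum>e\<in>E. inner (A *v e) e)"
    unfolding trace_eq_sum_onb[OF onb_Eh_E] by (rule sum.union_disjoint[OF finite_Eh finite_E Eh_E_disjoint])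
  moreover have "(\<Sum>e\<in>Eh. inner (A *v e) e) = 0"
    using assms onb_Eh by (auto simp: onb_def intro!: sum.neutral)
  ultimately show ?thesis by simp
qed

lemma exists_negative_eigenvalue:
  assumes "V \<in> SigmaSet h AdH"
  shows "\<exists>e\<in>E. lam e < 0"
proof (rule ccontr)
  assume "\<not> ?thesis"
  then have nonneg: "\<And>e. e \<in> E \<Longrightarrow> lam e \<ge> 0" by force
  have V_h: "V *v x = 0" "(V ** V) *v x = 0" if "x \<in> h" for x
    using assms that by (auto simp: SigmaSet_def matrix_vector_mul_assoc[symmetric])
  have VV: "(V ** V) *v e = (lam e * lam e) *\<^sub>R e" if "e \<in> E" for e
    using eigenvector_E[OF that] by (simp add: matrix_vector_mul_assoc[symmetric] linear_scale[OF matrix_vector_mul_linear])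
  have "(\<Sum>e\<in>E. lam e) = trace V"
    using trace_eq_sum_E[of V] V_h eigenvector_E inner_E by simp
  then have "\<forall>e\<in>E. lam e = 0"
    using assms nonneg sum_nonneg_eq_0_iff[OF finite_E, of lam] by (simp add: SigmaSet_def)
  moreover have "(\<Sum>e\<in>E. lam e * lam e) = trace (V ** V)"
    using trace_eq_sum_E[of "V ** V"] V_h VV inner_E by simp
  ultimately show False using assms by (simp add: SigmaSet_def)
qed

lemma vhat1_le_eigenvalue:
  assumes sym: "transpose V = V" and e: "e \<in> E"
  shows "vhat1 h V \<le> lam e"
proof -
  let ?S = "{c. \<exists>x\<in>m. x \<noteq> 0 \<and> V *v x = c *\<^sub>R x}"
  have "?S \<subseteq> lam ` E"
  proof
    fix c assume "c \<in> ?S"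
    then obtain x where x: "x \<in> m" "x \<noteq> 0" "V *v x = c *\<^sub>R x" by blast
    obtain f where f: "f \<in> E" "inner x f \<noteq> 0"
      using onb_expansion[OF onb_E x(1)] x(2) by (metis (no_types, lifting) scale_zero_left sum.neutral)
    have "c * inner x f = lam f * inner x f"
      using x(3) eigenvector_E[OF f(1)] inner_symmetric_matrix[OF sym, of x f] by simp
    then show "c \<in> lam ` E" using f by simp
  qed
  then have "finite ?S" using finite_subset finite_E by blast
  moreover have "lam e \<in> ?S"
  proof -
    have "e \<in> m" "e \<noteq> 0" using e E_subset_m inner_E[OF e e] by auto
    then show ?thesis using eigenvector_E[OF e] by blast
  qed
  ultimately show ?thesis unfolding vhat1_def by (rule Min_le)
qed


abbreviation "G t \<equiv> gamma V t"

lemma gamma_m: "x \<in> m \<Longrightarrow> G t x y = (\<Sum>e\<in>E. exp (t * lam e) * inner x e * inner e y)"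
proof -
  assume x: "x \<in> m"
  have "mexp (t *\<^sub>R V) *v x = mexp (t *\<^sub>R V) *v (\<Sum>e\<in>E. inner x e *\<^sub>R e)"
    using onb_expansion[OF onb_E x] by simp
  also have "\<dots> = (\<Sum>e\<in>E. inner x e *\<^sub>R (mexp (t *\<^sub>R V) *v e))"
    by (rule linear_sum_scaleR[OF matrix_vector_mul_linear finite_E])
  also have "\<dots> = (\<Sum>e\<in>E. (exp (t * lam e) * inner x e) *\<^sub>R e)"
    by (rule sum.cong) (simp_all add: mexp_eigenvector[OF eigenvector_E])
  finally show ?thesis by (simp add: gamma_def inner_sum_left)
qed

lemma bilinear_gamma: "bilinear (G t)"
  unfolding gamma_def
  by (rule bilinear_compose_linear[OF bilinear_inner matrix_vector_mul_linear linear_id[unfolded id_def]])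

lemma linear_gamma_left: "linear (\<lambda>x. G t x y)"
  using bilinear_gamma by (simp add: bilinear_def)

lemma gamma_sym: "x \<in> m \<Longrightarrow> y \<in> m \<Longrightarrow> G t x y = G t y x"
  by (simp add: gamma_m inner_commute mult_ac)

lemma gamma_eigenvector: "x \<in> m \<Longrightarrow> e \<in> E \<Longrightarrow> G t x e = exp (t * lam e) * inner x e"
proof -
  assume x: "x \<in> m" and e: "e \<in> E"
  have "G t x e = (\<Sum>f\<in>E. if f = e then exp (t * lam f) * inner x f else 0)"
    unfolding gamma_m[OF x] by (rule sum.cong) (use inner_E e in auto)
  then show ?thesis using finite_E e by simp
qed

lemma gamma_projm_self: "G t (P y) (P y) = (\<Sum>f\<in>E. exp (t * lam f) * (inner y f)\<^sup>2)"
  unfolding gamma_m[OF projm_in_m]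
  by (rule sum.cong) (use E_subset_m inner_projm in \<open>auto simp: inner_commute power2_eq_square\<close>)

definition "rescale t e = exp (- (t * lam e) / 2) *\<^sub>R e"

lemma gamma_rescale:
  assumes "e \<in> E" "f \<in> E"
  shows "G t (rescale t e) (rescale t f) = (if e = f then 1 else 0)"
proof -
  have "G t (rescale t e) (rescale t f) = exp (- (t * lam e) / 2) * exp (- (t * lam f) / 2) * exp (t * lam f) * inner e f"
    using gamma_eigenvector[of e f t] assms E_subset_m
    by (auto simp: rescale_def bilinear_lmul[OF bilinear_gamma] bilinear_rmul[OF bilinear_gamma])
  also have "\<dots> = (if e = f then 1 else 0)"
    using inner_E[OF assms] by (simp add: exp_add[symmetric])
  finally show ?thesis .
qed

lemma inj_on_rescale: "inj_on (rescale t) E"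
  by (rule inj_onI) (metis gamma_rescale zero_neq_one)

lemma gonb_rescale: "gonb h (G t) (rescale t ` E)"
  unfolding gonb_def
proof (intro conjI ballI impI)
  show "rescale t ` E \<subseteq> m" using E_subset_m subspace_m by (auto simp: rescale_def subspace_scale)
  show "span (rescale t ` E) = m"
    using span_image_scale[OF finite_E, of "\<lambda>e. exp (- (t * lam e) / 2)"] span_E by (simp add: rescale_def)
qed (use gamma_rescale in auto)

lemma gonb_sum_diag:
  assumes B: "gonb h (G t) B" and \<beta>: "bilinear \<beta>"
  shows "(\<Sum>b\<in>B. \<beta> b b) = (\<Sum>e\<in>E. exp (- (t * lam e)) * \<beta> e e)"
proof -
  have "(\<Sum>b\<in>B. \<beta> b b) = (\<Sum>b\<in>rescale t ` E. \<beta> b b)"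
    by (rule orthonormal_trace_eq[where S=m, OF linear_gamma_left gamma_sym \<beta>
          gonb_finite[OF gonb_rescale linear_gamma_left] _ _ gonb_orthonormal[OF gonb_rescale]
          gonb_finite[OF B linear_gamma_left] _ _ gonb_orthonormal[OF B]])
       (use B gonb_rescale[of t] in \<open>auto simp: gonb_def\<close>)
  also have "\<dots> = (\<Sum>e\<in>E. \<beta> (rescale t e) (rescale t e))"
    by (rule sum.reindex[OF inj_on_rescale, unfolded o_def])
  also have "\<dots> = (\<Sum>e\<in>E. exp (- (t * lam e)) * \<beta> e e)"
    by (simp add: rescale_def bilinear_lmul[OF \<beta>] bilinear_rmul[OF \<beta>] exp_add[symmetric] mult.assoc[symmetric])
  finally show ?thesis .
qed

lemma gonb_sum_sum_sq:
  assumes B: "gonb h (G t) B" and \<beta>: "bilinear \<beta>"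
  shows "(\<Sum>b\<in>B. \<Sum>c\<in>B. (\<beta> b c)\<^sup>2) =
    (\<Sum>e\<in>E. \<Sum>f\<in>E. exp (- (t * lam e)) * exp (- (t * lam f)) * (\<beta> e f)\<^sup>2)"
proof -
  have lin: "linear (\<beta> x)" "linear (\<lambda>y. \<beta> y x)" for x
    using \<beta> by (simp_all add: bilinear_def)
  have rows: "(\<Sum>c\<in>B. (\<beta> b c)\<^sup>2) = (\<Sum>f\<in>E. exp (- (t * lam f)) * (\<beta> b f)\<^sup>2)" for b
    using gonb_sum_diag[OF B bilinear_mult_linear[OF lin(1) lin(1)]] by (simp add: power2_eq_square)
  have cols: "(\<Sum>b\<in>B. (\<beta> b f)\<^sup>2) = (\<Sum>e\<in>E. exp (- (t * lam e)) * (\<beta> e f)\<^sup>2)" for f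
    using gonb_sum_diag[OF B bilinear_mult_linear[OF lin(2) lin(2)]] by (simp add: power2_eq_square)
  have "(\<Sum>b\<in>B. \<Sum>c\<in>B. (\<beta> b c)\<^sup>2) = (\<Sum>b\<in>B. \<Sum>f\<in>E. exp (- (t * lam f)) * (\<beta> b f)\<^sup>2)"
    by (simp add: rows)
  also have "\<dots> = (\<Sum>f\<in>E. \<Sum>b\<in>B. exp (- (t * lam f)) * (\<beta> b f)\<^sup>2)"
    by (rule sum.swap)
  also have "\<dots> = (\<Sum>f\<in>E. exp (- (t * lam f)) * (\<Sum>e\<in>E. exp (- (t * lam e)) * (\<beta> e f)\<^sup>2))"
    by (simp add: sum_distrib_left[symmetric] cols)
  also have "\<dots> = (\<Sum>f\<in>E. \<Sum>e\<in>E. exp (- (t * lam e)) * exp (- (t * lam f)) * (\<beta> e f)\<^sup>2)"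
    by (simp add: sum_distrib_left mult_ac)
  also have "\<dots> = (\<Sum>e\<in>E. \<Sum>f\<in>E. exp (- (t * lam e)) * exp (- (t * lam f)) * (\<beta> e f)\<^sup>2)"
    by (rule sum.swap)
  finally show ?thesis .
qed

lemma gonb_some: "gonb h (G t) (SOME B. gonb h (G t) B)"
  by (rule someI) (rule gonb_rescale)

end


locale submersion_eigenframe = eigenframe br h V lam E
  for br :: "real^'n \<Rightarrow> real^'n \<Rightarrow> real^'n" and h V lam E +
  fixes EF :: "(real^'n) set" and \<mu> :: real
  assumes EF_subset_E: "EF \<subseteq> E" and eigenvalue_EF: "\<And>e. e \<in> EF \<Longrightarrow> lam e = \<mu>"
    and submersion: "\<And>a b c. a \<in> E \<Longrightarrow> b \<in> E \<Longrightarrow> c \<in> E \<Longrightarrow> inner (br a b) c \<noteq> 0 \<Longrightarrow>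
      lam a - lam b - lam c + \<mu> \<le> 0"
begin

lemma finite_EF: "finite EF"
  using finite_subset[OF EF_subset_E finite_E] .

lemma eigenvalue_le_if_inner_br:
  assumes "e0 \<in> EF" "e \<in> E" "f \<in> E" "inner (br e0 e) f \<noteq> 0"
  shows "lam f \<le> lam e"
proof -
  have "inner (br f e0) e \<noteq> 0"
    using assms(4) inner_br_assoc[of f e0 e] by (simp add: inner_commute)
  then have "lam f - lam e0 - lam e + \<mu> \<le> 0"
    using submersion[OF assms(3) _ assms(2)] assms(1) EF_subset_E by blast
  then show ?thesis using eigenvalue_EF[OF assms(1)] by simp
qed

lemma ricci_first_term_le:
  assumes B: "gonb h (G t) B" and e0: "e0 \<in> EF" and t: "t \<ge> 0"
  shows "(\<Sum>b\<in>B. G t (P (br e0 b)) (P (br e0 b))) \<le> (\<Sum>e\<in>E. (norm (br e0 e))\<^sup>2)"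
proof -
  have lin: "linear (\<lambda>x. P (br e0 x))"
    using linear_compose[OF linear_br_right linear_projm] by (simp add: o_def)
  have "(\<Sum>b\<in>B. G t (P (br e0 b)) (P (br e0 b))) =
      (\<Sum>e\<in>E. exp (- (t * lam e)) * G t (P (br e0 e)) (P (br e0 e)))"
    by (rule gonb_sum_diag[OF B bilinear_compose_linear[OF bilinear_gamma lin lin]])
  also have "\<dots> \<le> (\<Sum>e\<in>E. (norm (br e0 e))\<^sup>2)"
  proof (rule sum_mono)
    fix e assume e: "e \<in> E"
    have "exp (- (t * lam e)) * G t (P (br e0 e)) (P (br e0 e)) =
        (\<Sum>f\<in>E. exp (- (t * lam e)) * exp (t * lam f) * (inner (br e0 e) f)\<^sup>2)"
      by (simp add: gamma_projm_self sum_distrib_left mult.assoc)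
    also have "\<dots> \<le> (\<Sum>f\<in>E. (inner (br e0 e) f)\<^sup>2)"
    proof (rule sum_mono)
      fix f assume f: "f \<in> E"
      show "exp (- (t * lam e)) * exp (t * lam f) * (inner (br e0 e) f)\<^sup>2 \<le> (inner (br e0 e) f)\<^sup>2"
      proof (cases "inner (br e0 e) f = 0")
        case False
        then have "t * lam f \<le> t * lam e"
          using eigenvalue_le_if_inner_br[OF e0 e f] t by (simp add: mult_left_mono)
        then have "exp (- (t * lam e)) * exp (t * lam f) \<le> 1"
          by (simp add: exp_add[symmetric])
        then show ?thesis by (simp add: mult_left_le_one_le)
      qed simp
    qed
    also have "\<dots> \<le> (norm (br e0 e))\<^sup>2" by (rule sum_sq_inner_E_le)
    finally show "exp (- (t * lam e)) * G t (P (br e0 e)) (P (br e0 e)) \<le> (norm (br e0 e))\<^sup>2" .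
  qed
  finally show ?thesis .
qed

lemma ricci_last_term_ge:
  assumes B: "gonb h (G t) B" and e0: "e0 \<in> EF"
  shows "(\<Sum>e\<in>EF. \<Sum>f\<in>EF. (inner (br e f) e0)\<^sup>2) \<le>
    (\<Sum>b\<in>B. \<Sum>c\<in>B. G t (P (br b c)) e0 * G t (P (br b c)) e0)"
proof -
  let ?F = "\<lambda>u v. G t (P (br u v)) e0"
  let ?w = "\<lambda>e f. exp (- (t * lam e)) * exp (- (t * lam f)) * (?F e f)\<^sup>2"
  have e0_E: "e0 \<in> E" using e0 EF_subset_E by auto
  have F: "bilinear ?F"
    using linear_compose[OF linear_projm linear_gamma_left]
    by (intro linear_compose_bilinear[OF _ bilinear_br]) (simp add: o_def)
  have F_val: "?F u v = exp (t * \<mu>) * inner (br u v) e0" for u v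
    using gamma_eigenvector[OF projm_in_m e0_E] inner_projm[of e0] e0_E E_subset_m eigenvalue_EF[OF e0]
    by auto
  have "(\<Sum>e\<in>EF. \<Sum>f\<in>EF. (inner (br e f) e0)\<^sup>2) = (\<Sum>e\<in>EF. \<Sum>f\<in>EF. ?w e f)"
    by (intro sum.cong refl)
       (simp add: F_val eigenvalue_EF power_mult_distrib power2_eq_square exp_add[symmetric] mult_ac)
  also have "\<dots> \<le> (\<Sum>e\<in>EF. \<Sum>f\<in>E. ?w e f)"
    by (intro sum_mono sum_mono2[OF finite_E EF_subset_E]) simp
  also have "\<dots> \<le> (\<Sum>e\<in>E. \<Sum>f\<in>E. ?w e f)"
    by (intro sum_mono2[OF finite_E EF_subset_E] sum_nonneg) simp
  also have "\<dots> = (\<Sum>b\<in>B. \<Sum>c\<in>B. (?F b c)\<^sup>2)"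
    by (rule gonb_sum_sum_sq[OF B F, symmetric])
  finally show ?thesis by (simp add: power2_eq_square)
qed

definition "L x = 1/2 * (\<Sum>e\<in>Eh. (norm (br x e))\<^sup>2) + 1/4 * (\<Sum>e\<in>EF. \<Sum>f\<in>EF. (inner (br e f) x)\<^sup>2)"

lemma L_nonneg: "L x \<ge> 0"
  unfolding L_def by (intro add_nonneg_nonneg mult_nonneg_nonneg sum_nonneg) auto

lemma ricci_ge_L:
  assumes e0: "e0 \<in> EF" and t: "t \<ge> 0"
  shows "L e0 \<le> ricci br h (G t) e0 e0"
proof -
  let ?B = "SOME B. gonb h (G t) B"
  have "ricci br h (G t) e0 e0 =
      - (1/2) * (\<Sum>b\<in>?B. G t (P (br e0 b)) (P (br e0 b))) - (1/2) * killing br e0 e0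
      + (1/4) * (\<Sum>b\<in>?B. \<Sum>c\<in>?B. G t (P (br b c)) e0 * G t (P (br b c)) e0)"
    by (simp add: ricci_def Let_def)
  moreover have "killing br e0 e0 = - ((\<Sum>e\<in>Eh. (norm (br e0 e))\<^sup>2) + (\<Sum>e\<in>E. (norm (br e0 e))\<^sup>2))"
    using killing_self[of e0]
      sum.union_disjoint[OF finite_Eh finite_E Eh_E_disjoint, of "\<lambda>e. (norm (br e0 e))\<^sup>2"]
    by linarith
  moreover note ricci_first_term_le[OF gonb_some e0 t] ricci_last_term_ge[OF gonb_some[of t] e0]
  ultimately show ?thesis unfolding L_def by linarith
qed

lemma ric_norm_ge:
  assumes e0: "e0 \<in> EF" and t: "t \<ge> 0"
  shows "exp (- (t * \<mu>)) * L e0 \<le> ric_norm br h (G t)"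
proof -
  let ?B = "SOME B. gonb h (G t) B" and ?R = "ricci br h (G t)"
  let ?w = "\<lambda>e f. exp (- (t * lam e)) * exp (- (t * lam f)) * (?R e f)\<^sup>2"
  have e0_E: "e0 \<in> E" using e0 EF_subset_E by auto
  have "(exp (- (t * \<mu>)) * ?R e0 e0)\<^sup>2 = ?w e0 e0"
    using eigenvalue_EF[OF e0] by (simp add: power_mult_distrib power2_eq_square)
  also have "\<dots> \<le> (\<Sum>f\<in>E. ?w e0 f)"
    by (rule member_le_sum[OF e0_E _ finite_E]) simp
  also have "\<dots> \<le> (\<Sum>e\<in>E. \<Sum>f\<in>E. ?w e f)"
    by (rule member_le_sum[OF e0_E _ finite_E]) (simp add: sum_nonneg)
  also have "\<dots> = (\<Sum>b\<in>?B. \<Sum>c\<in>?B. (?R b c)\<^sup>2)"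
    by (rule gonb_sum_sum_sq[OF gonb_some bilinear_ricci[OF bilinear_gamma], symmetric])
  finally have "exp (- (t * \<mu>)) * ?R e0 e0 \<le> ric_norm br h (G t)"
    unfolding ric_norm_def Let_def by (rule real_le_rsqrt)
  moreover have "exp (- (t * \<mu>)) * L e0 \<le> exp (- (t * \<mu>)) * ?R e0 e0"
    using ricci_ge_L[OF e0 t] by simp
  ultimately show ?thesis by linarith
qed

lemma exists_L_pos:
  assumes hsa: "lie_subalgebra br h" and ksa: "lie_subalgebra br k" and hk: "h \<subseteq> k"
    and k_m: "span EF = k \<inter> m" and non_toral: "non_toral br h k"
  shows "\<exists>e0\<in>EF. L e0 > 0"
proof (rule ccontr)
  assume "\<not> ?thesis"
  then have parts: "(\<Sum>e\<in>Eh. (norm (br e0 e))\<^sup>2) = 0" "(\<Sum>e\<in>EF. \<Sum>f\<in>EF. (inner (br e f) e0)\<^sup>2) = 0"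
    if "e0 \<in> EF" for e0
    using that L_nonneg[of e0] sum_nonneg[of Eh "\<lambda>e. (norm (br e0 e))\<^sup>2"]
      sum_nonneg[of EF "\<lambda>e. \<Sum>f\<in>EF. (inner (br e f) e0)\<^sup>2"]
    unfolding L_def by (force intro: sum_nonneg)+
  have basis_commute: "br e0 e = 0" if "e0 \<in> EF" "e \<in> Eh" for e0 e
    using parts(1)[OF that(1)] sum_nonneg_eq_0_iff[OF finite_Eh, of "\<lambda>e. (norm (br e0 e))\<^sup>2"] that(2)
    by simp
  have basis_orth: "inner (br e f) e0 = 0" if "e0 \<in> EF" "e \<in> EF" "f \<in> EF" for e0 e f
  proof -
    have "\<forall>e\<in>EF. (\<Sum>f\<in>EF. (inner (br e f) e0)\<^sup>2) = 0"
      by (rule sum_nonneg_eq_0_iff[OF finite_EF, THEN iffD1, OF _ parts(2)[OF that(1)]])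
         (simp add: sum_nonneg)
    then show ?thesis
      using that(2,3) sum_nonneg_eq_0_iff[OF finite_EF, of "\<lambda>f. (inner (br e f) e0)\<^sup>2"] by simp
  qed
  have "\<not> non_toral br h k"
  proof (rule toral_if_centralizing[OF hsa ksa hk])
    show "br x y = 0" if "x \<in> k \<inter> m" "y \<in> h" for x y
      by (rule bilinear_eq_0_on_span[OF bilinear_br, of x EF y Eh])
         (use that k_m onb_Eh basis_commute in \<open>auto simp: onb_def\<close>)
    show "inner (br x y) z = 0" if "x \<in> k \<inter> m" "y \<in> k \<inter> m" "z \<in> k \<inter> m" for x y z
    proof (rule bilinear_eq_0_on_span[of "\<lambda>x y. inner (br x y) z" x EF y EF])
      show "bilinear (\<lambda>x y. inner (br x y) z)"
        by (rule linear_compose_bilinear[OF bounded_linear.linear[OF bounded_linear_inner_left] bilinear_br])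
      show "inner (br e f) z = 0" if "e \<in> EF" "f \<in> EF" for e f
        by (rule real_vector.linear_eq_0_on_span[OF bounded_linear.linear[OF bounded_linear_inner_right], where b=EF])
           (use basis_orth that \<open>z \<in> k \<inter> m\<close> k_m in auto)
    qed (use that k_m in auto)
  qed
  then show False using non_toral by simp
qed

end


lemma lie_pair_if_homog_setting: "homog_setting br h AdH \<Longrightarrow> lie_pair br h"
  by (auto simp: homog_setting_def lie_algebra_def lie_subalgebra_def lie_pair_def)

lemma onb_of_decomposition:
  assumes "decomposition h AdH \<phi>" "i < length \<phi>"
  shows "onb (\<phi>!i) (onb_of (\<phi>!i))"
  using assms by (intro onb_onb_of) (auto simp: decomposition_def adh_irreducible_def)

lemma onb_decomposition:
  assumes dec: "decomposition h AdH \<phi>"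
  shows "onb (mspace h) (\<Union>i<length \<phi>. onb_of (\<phi>!i))"
proof -
  let ?B = "\<lambda>i. onb_of (\<phi>!i)"
  have B: "onb (\<phi>!i) (?B i)" if "i < length \<phi>" for i
    by (rule onb_of_decomposition[OF dec that])
  have "span (\<Union>i<length \<phi>. ?B i) = span (\<Union>i<length \<phi>. \<phi>!i)"
    by (rule span_UN_onb) (use B in auto)
  also have "(\<Union>i<length \<phi>. \<phi>!i) = \<Union>(set \<phi>)"
  proof
    show "(\<Union>i<length \<phi>. \<phi>!i) \<subseteq> \<Union>(set \<phi>)" using nth_mem by fastforce
    show "\<Union>(set \<phi>) \<subseteq> (\<Union>i<length \<phi>. \<phi>!i)" by (auto simp: in_set_conv_nth)
  qed
  finally have span: "span (\<Union>i<length \<phi>. ?B i) = mspace h"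
    using dec by (simp add: decomposition_def)
  have orth: "inner x y = 0" if "x \<in> ?B i" "y \<in> ?B j" "x \<noteq> y" "i < length \<phi>" "j < length \<phi>" for i j x y
  proof (cases "i = j")
    case True
    then show ?thesis using onb_inner[OF B[OF that(4)]] that by simp
  next
    case False
    have "x \<in> \<phi>!i" "y \<in> \<phi>!j" using B[OF that(4)] B[OF that(5)] that(1,2) unfolding onb_def by blast+
    then show ?thesis using dec False that(4,5) by (simp add: decomposition_def)
  qed
  show ?thesis
    unfolding onb_def
  proof (intro conjI)
    show "span (\<Union>i<length \<phi>. ?B i) = mspace h" by (rule span)
    then show "(\<Union>i<length \<phi>. ?B i) \<subseteq> mspace h" using span_superset by metis
    show "\<forall>b\<in>(\<Union>i<length \<phi>. ?B i). norm b = 1" using B by (auto simp: onb_def)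
    show "pairwise orthogonal (\<Union>i<length \<phi>. ?B i)"
    proof (rule pairwiseI)
      fix x y assume "x \<in> (\<Union>i<length \<phi>. ?B i)" "y \<in> (\<Union>i<length \<phi>. ?B i)" "x \<noteq> y"
      then show "orthogonal x y" using orth unfolding orthogonal_def by auto
    qed
  qed
qed

lemma good_decomp_eigenvector:
  assumes "good_decomp h AdH V \<phi>" "i < length \<phi>" "x \<in> \<phi>!i"
  shows "V *v x = vcoef V (\<phi>!i) *\<^sub>R x"
proof -
  have "\<forall>x\<in>\<phi>!i. V *v x = vcoef V (\<phi>!i) *\<^sub>R x"
    unfolding vcoef_def by (rule someI_ex) (use assms in \<open>auto simp: good_decomp_def\<close>)
  then show ?thesis using assms(3) by blast
qed

lemma good_decomp_onb_of_eigenvector: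
  assumes gd: "good_decomp h AdH V \<phi>" and i: "i < length \<phi>" and e: "e \<in> onb_of (\<phi>!i)"
  shows "V *v e = inner (V *v e) e *\<^sub>R e" "inner (V *v e) e = vcoef V (\<phi>!i)"
proof -
  have B: "onb (\<phi>!i) (onb_of (\<phi>!i))"
    using gd i by (intro onb_of_decomposition) (auto simp: good_decomp_def)
  then have "e \<in> \<phi>!i" "inner e e = 1"
    using onb_inner[OF B e e] e by (auto simp: onb_def)
  then show "V *v e = inner (V *v e) e *\<^sub>R e" "inner (V *v e) e = vcoef V (\<phi>!i)"
    using good_decomp_eigenvector[OF gd i] by simp_all
qed

lemma bracket_coef_pos:
  assumes dec: "decomposition h AdH \<phi>" and ijl: "i < length \<phi>" "j < length \<phi>" "l < length \<phi>"
    and abc: "a \<in> onb_of (\<phi>!i)" "b \<in> onb_of (\<phi>!j)" "c \<in> onb_of (\<phi>!l)" "inner (br a b) c \<noteq> 0"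
  shows "bracket_coef br \<phi> i j l > 0"
proof -
  have fin: "finite (onb_of (\<phi>!n))" if "n < length \<phi>" for n
    by (rule onb_finite[OF onb_of_decomposition[OF dec that]])
  have "0 < (inner (br a b) c)\<^sup>2" using abc(4) by simp
  also have "\<dots> \<le> (\<Sum>c\<in>onb_of (\<phi>!l). (inner (br a b) c)\<^sup>2)"
    by (rule member_le_sum[OF abc(3) _ fin[OF ijl(3)]]) simp
  also have "\<dots> \<le> (\<Sum>b\<in>onb_of (\<phi>!j). \<Sum>c\<in>onb_of (\<phi>!l). (inner (br a b) c)\<^sup>2)"
    by (rule member_le_sum[OF abc(2) _ fin[OF ijl(2)], of "\<lambda>b. \<Sum>c\<in>onb_of (\<phi>!l). (inner (br a b) c)\<^sup>2"])
       (simp add: sum_nonneg)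
  also have "\<dots> \<le> (\<Sum>a\<in>onb_of (\<phi>!i). \<Sum>b\<in>onb_of (\<phi>!j). \<Sum>c\<in>onb_of (\<phi>!l). (inner (br a b) c)\<^sup>2)"
    by (rule member_le_sum[OF abc(1) _ fin[OF ijl(1)],
          of "\<lambda>a. \<Sum>b\<in>onb_of (\<phi>!j). \<Sum>c\<in>onb_of (\<phi>!l). (inner (br a b) c)\<^sup>2"])
       (simp add: sum_nonneg)
  finally show ?thesis by (simp add: bracket_coef_def onb_of_def)
qed

lemma W_Sigma_submersion_eigenframe:
  assumes hs: "homog_setting br h AdH" and V: "V \<in> W_Sigma br h AdH k"
  obtains lam E EF where "submersion_eigenframe br h V lam E EF (vhat1 h V)" "span EF = k \<inter> mspace h"
proof -
  obtain \<phi> where gd: "good_decomp h AdH V \<phi>" and SD: "\<And>i j l. i < length \<phi> \<Longrightarrow> j < length \<phi> \<Longrightarrow>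
      l < length \<phi> \<Longrightarrow> bracket_coef br \<phi> i j l > 0 \<Longrightarrow>
      vcoef V (\<phi>!i) - vcoef V (\<phi>!j) - vcoef V (\<phi>!l) + vhat1 h V \<le> 0"
    using V by (auto simp: W_Sigma_def submersion_dir_def)
  have dec: "decomposition h AdH \<phi>" using gd by (simp add: good_decomp_def)
  let ?B = "\<lambda>i. onb_of (\<phi>!i)"
  define lam where "lam e = inner (V *v e) e" for e
  note eigen = good_decomp_onb_of_eigenvector[OF gd, folded lam_def]
  have "submersion_eigenframe br h V lam (\<Union>i<length \<phi>. ?B i) (\<Union>i\<in>I1 h V \<phi>. ?B i) (vhat1 h V)"
  proof (intro submersion_eigenframe.intro eigenframe.intro eigenframe_axioms.intro
      submersion_eigenframe_axioms.intro lie_pair_if_homog_setting[OF hs] onb_decomposition[OF dec])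
    show "V *v e = lam e *\<^sub>R e" if "e \<in> (\<Union>i<length \<phi>. ?B i)" for e
      using eigen that by blast
    show "(\<Union>i\<in>I1 h V \<phi>. ?B i) \<subseteq> (\<Union>i<length \<phi>. ?B i)"
      by (auto simp: I1_def)
    show "lam e = vhat1 h V" if "e \<in> (\<Union>i\<in>I1 h V \<phi>. ?B i)" for e
      using eigen that by (auto simp: I1_def)
    show "lam a - lam b - lam c + vhat1 h V \<le> 0"
      if abc: "a \<in> (\<Union>i<length \<phi>. ?B i)" "b \<in> (\<Union>i<length \<phi>. ?B i)" "c \<in> (\<Union>i<length \<phi>. ?B i)"
        "inner (br a b) c \<noteq> 0" for a b c
    proof -
      obtain i j l where ijl: "i < length \<phi>" "j < length \<phi>" "l < length \<phi>" "a \<in> ?B i" "b \<in> ?B j" "c \<in> ?B l"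
        using abc(1-3) by blast
      have "bracket_coef br \<phi> i j l > 0" by (rule bracket_coef_pos[where br=br, OF dec ijl abc(4)])
      then show ?thesis
        using SD[OF ijl(1-3)] eigen(2)[OF ijl(1,4)] eigen(2)[OF ijl(2,5)] eigen(2)[OF ijl(3,6)] by simp
    qed
  qed
  moreover have "span (\<Union>i\<in>I1 h V \<phi>. ?B i) = k \<inter> mspace h"
    using span_UN_onb[of "I1 h V \<phi>" "\<lambda>i. \<phi>!i" ?B] onb_of_decomposition[OF dec] V gd
    by (auto simp: W_Sigma_def I1_def)
  ultimately show thesis using that by blast
qed

theorem mainTheorem11:
  fixes br :: "real^'n \<Rightarrow> real^'n \<Rightarrow> real^'n"
    and h k :: "(real^'n) set"
    and AdH :: "(real^'n^'n) set"
    and V :: "real^'n^'n"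
  assumes "homog_setting br h AdH"
    and "h_subalgebra br h AdH k"
    and "non_toral br h k"
    and "V \<in> W_Sigma br h AdH k"
  shows "filterlim (\<lambda>t. ric_norm br h (gamma V t)) at_top at_top"
proof -
  obtain lam E EF where frame: "submersion_eigenframe br h V lam E EF (vhat1 h V)"
    and k_m: "span EF = k \<inter> mspace h"
    using W_Sigma_submersion_eigenframe[OF assms(1,4)] by blast
  interpret submersion_eigenframe br h V lam E EF "vhat1 h V" by (rule frame)
  obtain e0 where e0: "e0 \<in> EF" "L e0 > 0"
    using exists_L_pos[OF _ _ _ k_m assms(3)] assms(1,2)
    by (auto simp: homog_setting_def h_subalgebra_def)
  have VS: "V \<in> SigmaSet h AdH" using assms(4) by (simp add: W_Sigma_def)
  then obtain e where "e \<in> E" "lam e < 0" using exists_negative_eigenvalue by blast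
  then have "vhat1 h V < 0" using vhat1_le_eigenvalue VS by (force simp: SigmaSet_def)
  show ?thesis
  proof (rule filterlim_at_top_mono[OF filterlim_exp_mult_at_top[OF \<open>vhat1 h V < 0\<close> e0(2)]])
    show "\<forall>\<^sub>F t in at_top. exp (- (t * vhat1 h V)) * L e0 \<le> ric_norm br h (gamma V t)"
      using eventually_ge_at_top[of "0::real"] by eventually_elim (rule ric_norm_ge[OF e0(1)])
  qed
qed

end
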